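(* Let $G$ be a finite induced regular group and let $x\in G$ be such that $C_G(x)$ is a maximal centralizer and $C_G(x)\neq \beta_G(x)\cup Z(G)$. Then there is an element $y\in C_G(x)\setminus\beta_G(x)$ such that the order of $yZ(G)$ in $G/Z(G)$ is a prime.
   Context: For a finite group $G$, $C_G(x)$ denotes the centralizer of $x\in G$ and $Z(G)$ the center; $\beta_G(x)=\{y\in G\mid C_G(y)=C_G(x)\}$. The non-centralizer graph $\Upsilon_G$ is the simple graph with vertex set $G$ in which two distinct vertices $x,y$ are adjacent iff $C_G(x)\neq C_G(y)$; the induced non-centralizer graph $\Upsilon_{G\setminus Z(G)}$ is its induced subgraph on the vertex set $G\setminus Z(G)$. $G$ is called induced regular if $\Upsilon_{G\setminus Z(G)}$ is a regular graph (all vertices have the same degree). A centralizer $C_G(x)$ is called maximal if it is not contained in any other proper centralizer of $G$. *)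

theory Defs
  imports "HOL-Algebra.Algebra"
begin

definition centralizer_of :: "('a, 'b) monoid_scheme \<Rightarrow> 'a \<Rightarrow> 'a set" where
  "centralizer_of G x = {y \<in> carrier G. x \<otimes>\<^bsub>G\<^esub> y = y \<otimes>\<^bsub>G\<^esub> x}"

definition center_of :: "('a, 'b) monoid_scheme \<Rightarrow> 'a set" where
  "center_of G = {z \<in> carrier G. \<forall>y \<in> carrier G. z \<otimes>\<^bsub>G\<^esub> y = y \<otimes>\<^bsub>G\<^esub> z}"

definition beta_of :: "('a, 'b) monoid_scheme \<Rightarrow> 'a \<Rightarrow> 'a set" where
  "beta_of G x = {y \<in> carrier G. centralizer_of G y = centralizer_of G x}"

definition nc_adj :: "('a, 'b) monoid_scheme \<Rightarrow> 'a \<Rightarrow> 'a \<Rightarrow> bool" where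
  "nc_adj G x y \<longleftrightarrow> x \<noteq> y \<and> centralizer_of G x \<noteq> centralizer_of G y"

definition induced_nc_degree :: "('a, 'b) monoid_scheme \<Rightarrow> 'a \<Rightarrow> nat" where
  "induced_nc_degree G v = card {w \<in> carrier G - center_of G. nc_adj G v w}"

definition induced_regular :: "('a, 'b) monoid_scheme \<Rightarrow> bool" where
  "induced_regular G \<longleftrightarrow>
     (\<forall>u \<in> carrier G - center_of G. \<forall>v \<in> carrier G - center_of G.
        induced_nc_degree G u = induced_nc_degree G v)"

definition maximal_centralizer :: "('a, 'b) monoid_scheme \<Rightarrow> 'a \<Rightarrow> bool" where
  "maximal_centralizer G x \<longleftrightarrow> x \<in> carrier G \<and> centralizer_of G x \<noteq> carrier G \<and>
     (\<forall>y \<in> carrier G. centralizer_of G y \<noteq> carrier G \<longrightarrow>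
        centralizer_of G x \<subseteq> centralizer_of G y \<longrightarrow> centralizer_of G y = centralizer_of G x)"

end

(* Let A = Z(C_G(x)). Maximality of C_G(x) gives A = beta(x) \<union> Z(G), and induced regularity
   means that all noncentral elements v have beta-classes of the same size, since the degree
   of v is |G - Z(G)| - |beta(v)|. Take z \<in> C_G(x) - A and a prime p with z^p \<in> A (via the least
   power of an element that lands in A). If for no a \<in> A the element (za)^p were central, all
   of them would lie in A - Z(G) \<subseteq> beta(x); then C(za) and C(z) both lie in C_G(x), where a is
   central, so C(za) = C(z) and zA \<subseteq> beta(z). This is impossible, since
   |beta(z)| = |beta(x)| < |A| because 1 \<in> A - beta(x). So some y = za \<in> C_G(x) - A has central
   p-th power, i.e. yZ(G) has order p. *)

theory Submission
  imports Defs
begin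

lemma (in group) commute_inv:
  assumes "a \<in> carrier G" "y \<in> carrier G" "a \<otimes> y = y \<otimes> a"
  shows "inv a \<otimes> y = y \<otimes> inv a"
proof -
  have "inv a \<otimes> y = inv a \<otimes> (y \<otimes> a) \<otimes> inv a"
    using assms(1,2) by (simp add: m_assoc)
  also have "\<dots> = y \<otimes> inv a"
    using assms(1,2) by (simp flip: assms(3) add: m_assoc[symmetric])
  finally show ?thesis .
qed

lemma (in group) commute_mult:
  assumes "a \<in> carrier G" "b \<in> carrier G" "g \<in> carrier G"
    and "a \<otimes> g = g \<otimes> a" "b \<otimes> g = g \<otimes> b"
  shows "a \<otimes> b \<otimes> g = g \<otimes> (a \<otimes> b)"
proof -
  have "a \<otimes> b \<otimes> g = a \<otimes> (g \<otimes> b)"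
    using assms(1-3) by (simp add: m_assoc flip: assms(5))
  also have "\<dots> = g \<otimes> (a \<otimes> b)"
    using assms(1-3) by (simp flip: assms(4) add: m_assoc[symmetric])
  finally show ?thesis .
qed

lemma centralizer_of_subset_carrier: "centralizer_of G x \<subseteq> carrier G"
  by (auto simp: centralizer_of_def)

lemma (in group) subgroup_centralizer_of:
  assumes "x \<in> carrier G"
  shows "subgroup (centralizer_of G x) G"
proof (rule subgroupI)
  show "centralizer_of G x \<noteq> {}"
    using assms by (auto simp: centralizer_of_def)
  fix a b assume "a \<in> centralizer_of G x" "b \<in> centralizer_of G x"
  then have a: "a \<in> carrier G" "a \<otimes> x = x \<otimes> a" and b: "b \<in> carrier G" "b \<otimes> x = x \<otimes> b"
    by (auto simp: centralizer_of_def)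
  show "inv a \<in> centralizer_of G x"
    using commute_inv[OF a(1) assms a(2)] a(1) by (auto simp: centralizer_of_def)
  show "a \<otimes> b \<in> centralizer_of G x"
    using commute_mult[OF a(1) b(1) assms a(2) b(2)] a(1) b(1) by (auto simp: centralizer_of_def)
qed (rule centralizer_of_subset_carrier)

lemma (in group) subgroup_center_of: "subgroup (center_of G) G"
proof (rule subgroupI)
  show "center_of G \<noteq> {}"
    by (auto simp: center_of_def)
  fix a b assume "a \<in> center_of G" "b \<in> center_of G"
  then have a: "a \<in> carrier G" "\<And>y. y \<in> carrier G \<Longrightarrow> a \<otimes> y = y \<otimes> a"
    and b: "b \<in> carrier G" "\<And>y. y \<in> carrier G \<Longrightarrow> b \<otimes> y = y \<otimes> b"
    by (auto simp: center_of_def)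
  show "inv a \<in> center_of G"
    using a(1) commute_inv[OF a(1) _ a(2)] by (simp add: center_of_def)
  show "a \<otimes> b \<in> center_of G"
    using a(1) b(1) commute_mult[OF a(1) b(1) _ a(2) b(2)] by (simp add: center_of_def)
qed (auto simp: center_of_def)

lemma (in group) normal_center_of: "center_of G \<lhd> G"
proof (rule normalI[OF subgroup_center_of], intro ballI)
  fix g assume "g \<in> carrier G"
  then have "{h \<otimes> g} = {g \<otimes> h}" if "h \<in> center_of G" for h
    using that by (simp add: center_of_def)
  then show "center_of G #> g = g <# center_of G"
    unfolding r_coset_def l_coset_def by (rule SUP_cong[OF refl])
qed

lemma (in group) center_of_iff_centralizer_of_eq_carrier:
  assumes "w \<in> carrier G"
  shows "w \<in> center_of G \<longleftrightarrow> centralizer_of G w = carrier G"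
  using assms by (auto simp: center_of_def centralizer_of_def)

lemma (in group) beta_of_subset_carrier_Diff_center:
  assumes "v \<in> carrier G - center_of G"
  shows "beta_of G v \<subseteq> carrier G - center_of G"
  using assms center_of_iff_centralizer_of_eq_carrier by (auto simp: beta_of_def)

lemma (in group) induced_nc_degree_eq:
  assumes "finite (carrier G)" "v \<in> carrier G - center_of G"
  shows "induced_nc_degree G v = card (carrier G - center_of G) - card (beta_of G v)"
proof -
  have "{w \<in> carrier G - center_of G. nc_adj G v w} = (carrier G - center_of G) - beta_of G v"
    using assms(2) by (auto simp: nc_adj_def beta_of_def)
  then show ?thesis
    using assms beta_of_subset_carrier_Diff_center[OF assms(2)]
    by (simp add: induced_nc_degree_def card_Diff_subset finite_subset)
qed

lemma (in group) induced_regular_card_beta_of_eq: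
  assumes "finite (carrier G)" "induced_regular G"
    and "u \<in> carrier G - center_of G" "v \<in> carrier G - center_of G"
  shows "card (beta_of G u) = card (beta_of G v)"
proof -
  have "card (beta_of G w) \<le> card (carrier G - center_of G)" if "w \<in> carrier G - center_of G" for w
    using assms(1) beta_of_subset_carrier_Diff_center[OF that] by (simp add: card_mono)
  then show ?thesis
    using assms induced_nc_degree_eq unfolding induced_regular_def
    by (metis diff_diff_cancel)
qed

lemma (in normal) ord_FactGroup_eq_prime:
  assumes "y \<in> carrier G" "y \<notin> H" "y [^] p \<in> H" "Factorial_Ring.prime (p::nat)"
  shows "group.ord (G Mod H) (H #> y) = p"
proof -
  interpret Q: group "G Mod H"
    by (rule factorgroup_is_group)
  have y: "H #> y \<in> carrier (G Mod H)"
    using assms(1) by (simp add: carrier_FactGroup)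
  have "(H #> y) [^]\<^bsub>G Mod H\<^esub> p = \<one>\<^bsub>G Mod H\<^esub>"
    using assms(1,3) by (simp add: FactGroup_pow rcos_const)
  then have "Q.ord (H #> y) dvd p"
    using Q.pow_eq_id[OF y] by simp
  moreover have "H #> y \<noteq> \<one>\<^bsub>G Mod H\<^esub>"
    using assms(1,2) rcos_self[OF assms(1) subgroup_axioms] by auto
  then have "Q.ord (H #> y) \<noteq> 1"
    using Q.ord_eq_1[OF y] by simp
  ultimately show ?thesis
    using assms(4) by (auto simp: prime_nat_iff)
qed

lemma (in group) subgroup_nat_pow_closed:
  assumes "subgroup H G" "h \<in> H"
  shows "h [^] (n::nat) \<in> H"
  using subgroup_int_pow_closed[OF assms, of "int n"] by (simp add: int_pow_int)

lemma (in group) exists_prime_pow_mem_subgroup: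
  assumes "finite (carrier G)" "subgroup H G" "g \<in> carrier G" "g \<notin> H"
  obtains k p :: nat where "Factorial_Ring.prime p" "g [^] k \<notin> H" "(g [^] k) [^] p \<in> H"
proof -
  define n where "n = (LEAST n::nat. 0 < n \<and> g [^] n \<in> H)"
  have "0 < ord g \<and> g [^] ord g \<in> H"
    using assms ord_ge_1 subgroup.one_closed by fastforce
  then have n: "0 < n \<and> g [^] n \<in> H"
    unfolding n_def by (rule LeastI)
  have n_least: "n \<le> m" if "0 < m" "g [^] m \<in> H" for m
    unfolding n_def using that by (simp add: Least_le)
  have "n \<noteq> 1"
    using n assms(3,4) by auto
  then obtain p where p: "Factorial_Ring.prime (p::nat)" "p dvd n"
    using prime_factor_nat by blast
  then obtain k where k: "n = k * p"
    by (metis dvd_def mult.commute)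
  with n p(1) have "0 < k" "k < n"
    using prime_gt_1_nat by auto
  then have "g [^] k \<notin> H"
    using n_least leD by blast
  moreover have "(g [^] k) [^] p \<in> H"
    using n k assms(3) by (simp add: nat_pow_pow)
  ultimately show thesis
    using p(1) that by blast
qed

lemma (in group) centralizer_of_subset_pow:
  assumes "g \<in> carrier G"
  shows "centralizer_of G g \<subseteq> centralizer_of G (g [^] (n::nat))"
  using assms by (auto simp: centralizer_of_def intro: group_commutes_pow)

lemma (in group) subgroup_center_of_centralizer_of:
  assumes "x \<in> carrier G"
  shows "subgroup (center_of (G\<lparr>carrier := centralizer_of G x\<rparr>)) G"
proof -
  have C: "subgroup (centralizer_of G x) G"
    using assms by (rule subgroup_centralizer_of)
  then interpret C: group "G\<lparr>carrier := centralizer_of G x\<rparr>"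
    by (rule subgroup.subgroup_is_group) (rule is_group)
  show ?thesis
    using C C.subgroup_center_of by (rule incl_subgroup)
qed

lemma (in group) center_of_maximal_centralizer:
  assumes "maximal_centralizer G x"
  shows "center_of (G\<lparr>carrier := centralizer_of G x\<rparr>) = beta_of G x \<union> center_of G"
proof (intro equalityI subsetI)
  fix a assume "a \<in> center_of (G\<lparr>carrier := centralizer_of G x\<rparr>)"
  then have a: "a \<in> carrier G" "centralizer_of G x \<subseteq> centralizer_of G a"
    by (auto simp: center_of_def centralizer_of_def)
  then have "centralizer_of G a = carrier G \<or> centralizer_of G a = centralizer_of G x"
    using assms unfolding maximal_centralizer_def by blast
  then show "a \<in> beta_of G x \<union> center_of G"
    using a(1) center_of_iff_centralizer_of_eq_carrier by (auto simp: beta_of_def)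
next
  fix a assume "a \<in> beta_of G x \<union> center_of G"
  moreover have "x \<in> carrier G"
    using assms by (simp add: maximal_centralizer_def)
  ultimately show "a \<in> center_of (G\<lparr>carrier := centralizer_of G x\<rparr>)"
    by (auto simp: beta_of_def center_of_def centralizer_of_def)
qed

lemma (in group) centralizer_of_mult_center_eq:
  assumes "z \<in> carrier G" "a \<in> center_of (G\<lparr>carrier := centralizer_of G x\<rparr>)"
    and "centralizer_of G z \<subseteq> centralizer_of G x"
    and "centralizer_of G (z \<otimes> a) \<subseteq> centralizer_of G x"
  shows "centralizer_of G (z \<otimes> a) = centralizer_of G z"
proof -
  have a: "a \<in> carrier G"
    using assms(2) by (auto simp: center_of_def centralizer_of_def)
  have "g \<in> centralizer_of G (z \<otimes> a) \<longleftrightarrow> g \<in> centralizer_of G z"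
    if g: "g \<in> centralizer_of G x" for g
  proof -
    have g_carrier: "g \<in> carrier G" and ag: "a \<otimes> g = g \<otimes> a"
      using g assms(2) by (auto simp: center_of_def centralizer_of_def)
    have "z \<otimes> a \<otimes> g = z \<otimes> g \<otimes> a"
      using assms(1) a g_carrier by (simp add: m_assoc ag)
    moreover have "g \<otimes> (z \<otimes> a) = g \<otimes> z \<otimes> a"
      using assms(1) a g_carrier by (simp add: m_assoc)
    ultimately show ?thesis
      using assms(1) a g_carrier by (simp add: centralizer_of_def)
  qed
  then show ?thesis
    using assms(3,4) by blast
qed

lemma (in group) exists_mult_center_pow_notin_beta_of:
  assumes "finite (carrier G)" "induced_regular G" "maximal_centralizer G x"
    and "z \<in> centralizer_of G x" "z \<notin> center_of (G\<lparr>carrier := centralizer_of G x\<rparr>)"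
  shows "\<exists>a \<in> center_of (G\<lparr>carrier := centralizer_of G x\<rparr>). (z \<otimes> a) [^] (p::nat) \<notin> beta_of G x"
proof (rule ccontr)
  let ?A = "center_of (G\<lparr>carrier := centralizer_of G x\<rparr>)"
  assume "\<not> ?thesis"
  then have pow_beta: "centralizer_of G ((z \<otimes> a) [^] p) = centralizer_of G x" if "a \<in> ?A" for a
    using that by (auto simp: beta_of_def)
  have A_eq: "?A = beta_of G x \<union> center_of G"
    using assms(3) by (rule center_of_maximal_centralizer)
  have A_carrier: "?A \<subseteq> carrier G"
    by (auto simp: center_of_def centralizer_of_def)
  have one: "\<one> \<in> center_of G"
    by (rule subgroup.one_closed[OF subgroup_center_of])
  have x: "x \<in> carrier G - center_of G"
    using assms(3) center_of_iff_centralizer_of_eq_carrier by (auto simp: maximal_centralizer_def)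
  have z: "z \<in> carrier G - center_of G"
    using assms(4,5) A_eq by (auto simp: centralizer_of_def)
  have "centralizer_of G z \<subseteq> centralizer_of G (z [^] p)"
    using z by (simp add: centralizer_of_subset_pow)
  also have "\<dots> = centralizer_of G x"
    using pow_beta[of \<one>] one A_eq z by simp
  finally have Cz: "centralizer_of G z \<subseteq> centralizer_of G x" .
  have coset_beta: "z \<otimes> a \<in> beta_of G z" if a: "a \<in> ?A" for a
  proof -
    have za: "z \<otimes> a \<in> carrier G"
      using z a A_carrier by blast
    have "centralizer_of G (z \<otimes> a) \<subseteq> centralizer_of G x"
      using centralizer_of_subset_pow[OF za, of p] pow_beta[OF a] by simp
    then show ?thesis
      using centralizer_of_mult_center_eq[OF _ a Cz] z za by (simp add: beta_of_def)
  qed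
  have "inj_on (\<lambda>a. z \<otimes> a) ?A"
    using z A_carrier by (intro inj_onI) (metis DiffE l_cancel subsetD)
  moreover have "(\<lambda>a. z \<otimes> a) ` ?A \<subseteq> beta_of G z"
    using coset_beta by blast
  moreover have "finite (beta_of G z)"
    using assms(1) beta_of_subset_carrier_Diff_center[OF z] finite_subset by blast
  ultimately have "card ?A \<le> card (beta_of G z)"
    by (rule card_inj_on_le)
  also have "\<dots> = card (beta_of G x)"
    using assms(1,2) z x by (rule induced_regular_card_beta_of_eq)
  also have "\<dots> < card ?A"
  proof (rule psubset_card_mono)
    show "finite ?A"
      using A_carrier assms(1) by (rule finite_subset)
    show "beta_of G x \<subset> ?A"
      using A_eq one beta_of_subset_carrier_Diff_center[OF x] by blast
  qed
  finally show False
    by simp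
qed

lemma (in group) exists_centralizer_pow_mem_center_of:
  assumes "finite (carrier G)" "induced_regular G" "maximal_centralizer G x"
    and "z \<in> centralizer_of G x" "z \<notin> center_of (G\<lparr>carrier := centralizer_of G x\<rparr>)"
    and "z [^] p \<in> center_of (G\<lparr>carrier := centralizer_of G x\<rparr>)"
  shows "\<exists>y \<in> centralizer_of G x - center_of (G\<lparr>carrier := centralizer_of G x\<rparr>).
           y [^] (p::nat) \<in> center_of G"
proof -
  let ?C = "centralizer_of G x"
  let ?A = "center_of (G\<lparr>carrier := ?C\<rparr>)"
  have "x \<in> carrier G"
    using assms(3) by (simp add: maximal_centralizer_def)
  then have C: "subgroup ?C G" and A: "subgroup ?A G"
    by (rule subgroup_centralizer_of, rule subgroup_center_of_centralizer_of)
  have A_eq: "?A = beta_of G x \<union> center_of G"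
    using assms(3) by (rule center_of_maximal_centralizer)
  obtain a where a: "a \<in> ?A" "(z \<otimes> a) [^] p \<notin> beta_of G x"
    using exists_mult_center_pow_notin_beta_of[OF assms(1-5)] by blast
  have carrier: "z \<in> carrier G" "a \<in> carrier G"
    using assms(4) a(1) by (auto simp: center_of_def centralizer_of_def)
  have "z \<otimes> a = a \<otimes> z"
    using a(1) assms(4) by (simp add: center_of_def)
  then have "(z \<otimes> a) [^] p = z [^] p \<otimes> a [^] p"
    using carrier by (rule pow_mult_distrib)
  also have "\<dots> \<in> ?A"
    using assms(6) subgroup_nat_pow_closed[OF A a(1)] by (rule subgroup.m_closed[OF A])
  finally have "(z \<otimes> a) [^] p \<in> center_of G"
    using a(2) A_eq by blast
  moreover have "z \<otimes> a \<in> ?C"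
    using a(1) by (intro subgroup.m_closed[OF C assms(4)]) (simp add: center_of_def)
  moreover have "z \<otimes> a \<notin> ?A"
  proof
    assume "z \<otimes> a \<in> ?A"
    then have "z \<otimes> a \<otimes> inv a \<in> ?A"
      using subgroup.m_inv_closed[OF A a(1)] by (rule subgroup.m_closed[OF A])
    then show False
      using assms(5) carrier by (simp add: m_assoc)
  qed
  ultimately show ?thesis
    by blast
qed

theorem proposition3p3:
  fixes G (structure) and x :: 'a
  assumes "group G" and "finite (carrier G)"
    and "induced_regular G"
    and "x \<in> carrier G"
    and "maximal_centralizer G x"
    and "centralizer_of G x \<noteq> beta_of G x \<union> center_of G"
  shows "\<exists>y \<in> centralizer_of G x - beta_of G x.
           Factorial_Ring.prime (group.ord (G Mod center_of G) (center_of G #> y))"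
proof -
  interpret group G by fact
  let ?C = "centralizer_of G x"
  let ?A = "center_of (G\<lparr>carrier := ?C\<rparr>)"
  have A_eq: "?A = beta_of G x \<union> center_of G"
    using assms(5) by (rule center_of_maximal_centralizer)
  have "?A \<subseteq> ?C"
    by (auto simp: center_of_def)
  then obtain z where z: "z \<in> ?C" "z \<notin> ?A"
    using assms(6) A_eq by blast
  then have "z \<in> carrier G"
    by (simp add: centralizer_of_def)
  then obtain k p :: nat
    where p: "Factorial_Ring.prime p" and "z [^] k \<notin> ?A" "(z [^] k) [^] p \<in> ?A"
    using exists_prime_pow_mem_subgroup[OF assms(2) subgroup_center_of_centralizer_of[OF assms(4)]
        _ z(2)] by blast
  moreover have "z [^] k \<in> ?C"
    using subgroup_centralizer_of[OF assms(4)] z(1) by (rule subgroup_nat_pow_closed)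
  ultimately obtain y where y: "y \<in> ?C" "y \<notin> ?A" "y [^] p \<in> center_of G"
    using exists_centralizer_pow_mem_center_of[OF assms(2,3,5)] by blast
  then have "y \<in> carrier G" "y \<notin> center_of G"
    using A_eq by (auto simp: centralizer_of_def)
  then have "group.ord (G Mod center_of G) (center_of G #> y) = p"
    using y(3) p by (intro normal.ord_FactGroup_eq_prime[OF normal_center_of])
  then show ?thesis
    using y(1,2) p A_eq by blast
qed

end
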